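(* Let $G$ be a trivalent graph embedded in the $2$-sphere with a perfect matching $M$ such that $G(V,E\setminus M)$ is a single cycle $C$. For a face $F$ of the embedding, let $m(F)$ be the number of edges of $M$ on the boundary of $F$ and $\ell(F)$ the number of vertices on the boundary of $F$ whose matching edge does not lie on the boundary of $F$. Then $G$ has a face $F$ with $$(m(F),\ell(F))\in\{(1,0),(1,1),(1,2),(2,0),(2,1),(3,0)\}.$$ Explicitly, $G$ contains one of the following local configurations: a digon bounded by one matching edge and one non-matching edge; a triangle bounded by one matching edge and two non-matching edges; a quadrilateral bounded by one matching edge and a path of three non-matching edges; a quadrilateral bounded alternately by two matching and two non-matching edges; a pentagon bounded by two non-adjacent matching edges and three non-matching edges; or a hexagon bounded alternately by three matching and three non-matching edges.
   Context: Graphs are finite and may have multiple edges; trivalent means every vertex has degree $3$. $G(V,E\setminus M)$ denotes the graph with all vertices of $G$ and all edges of $G$ not in $M$. *)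

theory Defs
  imports "HOL-Combinatorics.Permutations"
begin

text \<open>Graphs embedded in the 2-sphere are represented by combinatorial maps
(rotation systems): a finite set of darts D, a fixed-point-free involution alpha
(the two darts of each edge) and a permutation sigma (cyclic order of darts around
each vertex). Vertices are sigma-orbits, edges are alpha-orbits, faces are orbits of
phi = sigma o alpha. Multiple edges and loops are allowed.\<close>

definition morbit :: "('d \<Rightarrow> 'd) \<Rightarrow> 'd \<Rightarrow> 'd set" where
  "morbit f x = {(f ^^ n) x | n. True}"

definition comb_map :: "'d set \<Rightarrow> ('d \<Rightarrow> 'd) \<Rightarrow> ('d \<Rightarrow> 'd) \<Rightarrow> bool" where
  "comb_map D \<alpha> \<sigma> \<longleftrightarrow> finite D \<and> \<alpha> permutes D \<and> \<sigma> permutes D \<and>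
     (\<forall>d\<in>D. \<alpha> d \<noteq> d \<and> \<alpha> (\<alpha> d) = d)"

definition map_vertices :: "'d set \<Rightarrow> ('d \<Rightarrow> 'd) \<Rightarrow> 'd set set" where
  "map_vertices D \<sigma> = {morbit \<sigma> d | d. d \<in> D}"

definition map_edge :: "('d \<Rightarrow> 'd) \<Rightarrow> 'd \<Rightarrow> 'd set" where
  "map_edge \<alpha> d = {d, \<alpha> d}"

definition map_edges :: "'d set \<Rightarrow> ('d \<Rightarrow> 'd) \<Rightarrow> 'd set set" where
  "map_edges D \<alpha> = {map_edge \<alpha> d | d. d \<in> D}"

definition map_faces :: "'d set \<Rightarrow> ('d \<Rightarrow> 'd) \<Rightarrow> ('d \<Rightarrow> 'd) \<Rightarrow> 'd set set" where
  "map_faces D \<alpha> \<sigma> = {morbit (\<sigma> \<circ> \<alpha>) d | d. d \<in> D}"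

definition map_connected :: "'d set \<Rightarrow> ('d \<Rightarrow> 'd) \<Rightarrow> ('d \<Rightarrow> 'd) \<Rightarrow> bool" where
  "map_connected D \<alpha> \<sigma> \<longleftrightarrow>
     (\<forall>d\<in>D. \<forall>e\<in>D. (d, e) \<in> ({(x, \<alpha> x) | x. x \<in> D} \<union> {(x, \<sigma> x) | x. x \<in> D})\<^sup>*)"

text \<open>A connected graph embedded in the 2-sphere: connected map of Euler characteristic 2.\<close>
definition spherical_map :: "'d set \<Rightarrow> ('d \<Rightarrow> 'd) \<Rightarrow> ('d \<Rightarrow> 'd) \<Rightarrow> bool" where
  "spherical_map D \<alpha> \<sigma> \<longleftrightarrow> comb_map D \<alpha> \<sigma> \<and> map_connected D \<alpha> \<sigma> \<and>
     int (card (map_vertices D \<sigma>)) - int (card (map_edges D \<alpha>))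
       + int (card (map_faces D \<alpha> \<sigma>)) = 2"

definition trivalent :: "'d set \<Rightarrow> ('d \<Rightarrow> 'd) \<Rightarrow> bool" where
  "trivalent D \<sigma> \<longleftrightarrow> (\<forall>d\<in>D. card (morbit \<sigma> d) = 3)"

text \<open>A perfect matching, given as the set of darts of its edges.\<close>
definition perfect_matching :: "'d set \<Rightarrow> ('d \<Rightarrow> 'd) \<Rightarrow> ('d \<Rightarrow> 'd) \<Rightarrow> 'd set \<Rightarrow> bool" where
  "perfect_matching D \<alpha> \<sigma> M \<longleftrightarrow> M \<subseteq> D \<and> (\<forall>d\<in>M. \<alpha> d \<in> M) \<and>
     (\<forall>d\<in>D. card (morbit \<sigma> d \<inter> M) = 1)"

text \<open>G(V, E - M) is a single cycle: every vertex has degree 2 in it and it is connected.\<close>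
definition complement_single_cycle :: "'d set \<Rightarrow> ('d \<Rightarrow> 'd) \<Rightarrow> ('d \<Rightarrow> 'd) \<Rightarrow> 'd set \<Rightarrow> bool" where
  "complement_single_cycle D \<alpha> \<sigma> M \<longleftrightarrow>
     (\<forall>d\<in>D. card (morbit \<sigma> d - M) = 2) \<and>
     (\<forall>d\<in>D. \<forall>e\<in>D. (d, e) \<in> ({(x, \<alpha> x) | x. x \<in> D - M} \<union> {(x, \<sigma> x) | x. x \<in> D})\<^sup>*)"

definition face_m :: "('d \<Rightarrow> 'd) \<Rightarrow> 'd set \<Rightarrow> 'd set \<Rightarrow> nat" where
  "face_m \<alpha> M F = card {map_edge \<alpha> d | d. d \<in> F \<inter> M}"

definition face_l :: "('d \<Rightarrow> 'd) \<Rightarrow> ('d \<Rightarrow> 'd) \<Rightarrow> 'd set \<Rightarrow> 'd set \<Rightarrow> nat" where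
  "face_l \<alpha> \<sigma> M F = card {morbit \<sigma> d | d. d \<in> F \<and>
       (\<forall>x \<in> morbit \<sigma> d \<inter> M. map_edge \<alpha> x \<inter> F = {})}"

end

theory Submission
  imports Defs "HOL-Combinatorics.Orbits"
begin

text \<open>Trivalence and the perfect matching give \<open>|D| = 3V = 2E\<close> and \<open>V = |M|\<close>, so Euler's
formula becomes \<open>2 f = |M| + 4\<close> for the number \<open>f\<close> of faces. Weight a face \<open>F\<close> by the number of
its darts in \<open>M\<close> plus the number of its darts \<open>d\<close> with \<open>\<sigma> d \<in> M\<close>; these bound \<open>m(F)\<close> and
\<open>l(F)\<close>, and the weights sum to \<open>2 |M| = 4 f - 8\<close>. A face without matching edges is bounded by
the Hamiltonian cycle alone, hence visits every vertex, so there is at most one such face. If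
all other faces had weight at least 4 the total would be at least \<open>4 (f - 1)\<close>; hence some
face meeting \<open>M\<close> has \<open>m(F) + l(F) \<le> 3\<close>, which with \<open>m(F) \<ge> 1\<close> are exactly the six cases.\<close>

lemma morbit_eq_orbit: "permutation p \<Longrightarrow> morbit p x = orbit p x"
  by (simp add: morbit_def orbit_altdef_permutation)

lemma orbit_eq_if_in_orbit: "permutation p \<Longrightarrow> y \<in> orbit p x \<Longrightarrow> orbit p y = orbit p x"
  by (meson cyclic_on_orbit' orbit_cyclic_eq3)

lemma in_orbit_if_step_in_orbit: "permutation p \<Longrightarrow> p y \<in> orbit p x \<Longrightarrow> y \<in> orbit p x"
  by (metis orbit_eq_if_in_orbit permutation_orbit_step permutation_self_in_orbit)

lemma sum_card_orbits_Int:
  assumes "p permutes D" "finite D" "A \<subseteq> D"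
  shows "(\<Sum>B\<in>orbit p ` D. card (B \<inter> A)) = card A"
proof -
  have perm: "permutation p"
    using assms(1,2) permutation_permutes by blast
  have "A = (\<Union>B\<in>orbit p ` D. B \<inter> A)"
    using assms(3) permutation_self_in_orbit[OF perm] by blast
  also have "card \<dots> = (\<Sum>B\<in>orbit p ` D. card (B \<inter> A))"
  proof (rule card_UN_disjoint)
    show "\<forall>B\<in>orbit p ` D. finite (B \<inter> A)"
      using assms(2,3) finite_subset by blast
    show "\<forall>B\<in>orbit p ` D. \<forall>B'\<in>orbit p ` D. B \<noteq> B' \<longrightarrow> B \<inter> A \<inter> (B' \<inter> A) = {}"
      by (auto dest: orbit_eq_if_in_orbit[OF perm])
  qed (use assms(2) in simp)
  finally show ?thesis by simp
qed

lemma card_orbit_eq_funpow_dist1: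
  assumes "permutation p"
  shows "card (orbit p x) = funpow_dist1 p x x"
proof -
  have "x \<in> orbit p x" using assms by (rule permutation_self_in_orbit)
  then show ?thesis
    by (subst orbit_conv_funpow_dist1) (simp_all add: card_image inj_on_funpow_dist1)
qed

lemma orbit_of_card_3:
  assumes "permutation p" "card (orbit p x) = 3"
  shows "orbit p x = {x, p x, p (p x)}" "p (p (p x)) = x"
proof -
  have x: "x \<in> orbit p x" using assms(1) by (rule permutation_self_in_orbit)
  have dist: "funpow_dist1 p x x = 3"
    using assms card_orbit_eq_funpow_dist1 by metis
  have "orbit p x = (\<lambda>n. (p ^^ n) x) ` {0..<3}"
    using orbit_conv_funpow_dist1[OF x] dist by simp
  also have "{0..<3} = {0, 1, 2::nat}" by auto
  finally show "orbit p x = {x, p x, p (p x)}" by (simp add: numeral_2_eq_2)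
  have "(p ^^ 3) x = x" using funpow_dist1_prop[OF x] dist by simp
  then show "p (p (p x)) = x" by (simp add: numeral_3_eq_3)
qed

lemma orbit_of_involution:
  assumes "f (f x) = x"
  shows "orbit f x = {x, f x}"
proof
  show "orbit f x \<subseteq> {x, f x}"
  proof
    fix y assume "y \<in> orbit f x"
    then show "y \<in> {x, f x}" by induct (use assms in auto)
  qed
  show "{x, f x} \<subseteq> orbit f x"
    using assms orbit.base[of f x] orbit.step[of "f x" f x] by auto
qed

locale combinatorial_map =
  fixes D :: "'d set" and \<alpha> \<sigma> :: "'d \<Rightarrow> 'd"
  assumes comb_map: "comb_map D \<alpha> \<sigma>"
begin

abbreviation \<phi> :: "'d \<Rightarrow> 'd" where "\<phi> \<equiv> \<sigma> \<circ> \<alpha>"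

lemma finite_darts: "finite D"
  and alpha_permutes: "\<alpha> permutes D"
  and sigma_permutes: "\<sigma> permutes D"
  and alpha_fixfree: "d \<in> D \<Longrightarrow> \<alpha> d \<noteq> d"
  and alpha_alpha [simp]: "d \<in> D \<Longrightarrow> \<alpha> (\<alpha> d) = d"
  using comb_map by (auto simp: comb_map_def)

lemma phi_permutes: "\<phi> permutes D"
  using alpha_permutes sigma_permutes by (rule permutes_compose)

lemma permutation_sigma: "permutation \<sigma>"
  and permutation_phi: "permutation \<phi>"
  using finite_darts sigma_permutes phi_permutes permutation_permutes by blast+

lemma alpha_in_darts [simp]: "d \<in> D \<Longrightarrow> \<alpha> d \<in> D"
  and sigma_in_darts [simp]: "d \<in> D \<Longrightarrow> \<sigma> d \<in> D"
  using alpha_permutes sigma_permutes by (simp_all add: permutes_in_image)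

lemma map_vertices_eq: "map_vertices D \<sigma> = orbit \<sigma> ` D"
  unfolding map_vertices_def morbit_eq_orbit[OF permutation_sigma] by blast

lemma map_edges_eq: "map_edges D \<alpha> = orbit \<alpha> ` D"
proof -
  have "map_edges D \<alpha> = (\<lambda>d. {d, \<alpha> d}) ` D"
    by (auto simp: map_edges_def map_edge_def)
  also have "\<dots> = orbit \<alpha> ` D"
    by (rule image_cong) (simp_all add: orbit_of_involution)
  finally show ?thesis .
qed

lemma map_faces_eq: "map_faces D \<alpha> \<sigma> = orbit \<phi> ` D"
  unfolding map_faces_def morbit_eq_orbit[OF permutation_phi] by blast

lemma card_darts_eq_card_edges: "card D = 2 * card (map_edges D \<alpha>)"
proof -
  have "card D = (\<Sum>E\<in>map_edges D \<alpha>. card (E \<inter> D))"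
    unfolding map_edges_eq by (rule sum_card_orbits_Int[OF alpha_permutes finite_darts, symmetric]) simp
  also have "\<dots> = (\<Sum>E\<in>map_edges D \<alpha>. 2)"
    by (rule sum.cong) (auto simp: map_edges_eq orbit_of_involution alpha_fixfree[symmetric])
  finally show ?thesis by simp
qed

lemma finite_map_faces: "finite (map_faces D \<alpha> \<sigma>)"
  unfolding map_faces_eq using finite_darts by simp

lemma face_subset_darts: "F \<in> map_faces D \<alpha> \<sigma> \<Longrightarrow> F \<subseteq> D"
  unfolding map_faces_eq using permutes_orbit_subset[OF phi_permutes] by blast

lemma face_eq_orbit: "F \<in> map_faces D \<alpha> \<sigma> \<Longrightarrow> d \<in> F \<Longrightarrow> F = orbit \<phi> d"
  unfolding map_faces_eq using orbit_eq_if_in_orbit[OF permutation_phi] by blast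

lemma face_nonempty: "F \<in> map_faces D \<alpha> \<sigma> \<Longrightarrow> F \<noteq> {}"
  by (auto simp: map_faces_eq orbit_nonempty)

lemma phi_in_face_iff: "F \<in> map_faces D \<alpha> \<sigma> \<Longrightarrow> \<phi> d \<in> F \<longleftrightarrow> d \<in> F"
  unfolding map_faces_eq
  using in_orbit_if_step_in_orbit[OF permutation_phi] orbit.step[of _ \<phi>] by blast

end

locale cubic_matched_map = combinatorial_map D \<alpha> \<sigma> for D :: "'d set" and \<alpha> \<sigma> +
  fixes M :: "'d set"
  assumes trivalent: "trivalent D \<sigma>"
    and matching: "perfect_matching D \<alpha> \<sigma> M"
begin

lemma matching_subset: "M \<subseteq> D"
  and alpha_matching: "d \<in> M \<Longrightarrow> \<alpha> d \<in> M"
  and card_vertex_Int_matching: "d \<in> D \<Longrightarrow> card (orbit \<sigma> d \<inter> M) = 1"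
  using matching by (auto simp: perfect_matching_def morbit_eq_orbit[OF permutation_sigma])

lemma card_vertex: "d \<in> D \<Longrightarrow> card (orbit \<sigma> d) = 3"
  using trivalent by (simp add: trivalent_def morbit_eq_orbit[OF permutation_sigma])

lemma vertex_eq: "d \<in> D \<Longrightarrow> orbit \<sigma> d = {d, \<sigma> d, \<sigma> (\<sigma> d)}"
  and sigma_cube [simp]: "d \<in> D \<Longrightarrow> \<sigma> (\<sigma> (\<sigma> d)) = d"
  using orbit_of_card_3[OF permutation_sigma card_vertex] by blast+

lemma sigma_sigma_in_matching:
  "d \<in> D \<Longrightarrow> d \<notin> M \<Longrightarrow> \<sigma> d \<notin> M \<Longrightarrow> \<sigma> (\<sigma> d) \<in> M"
  using card_vertex_Int_matching[of d] vertex_eq[of d]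
  by (auto simp: Int_insert_left split: if_splits)

lemma card_darts_eq_card_vertices: "card D = 3 * card (map_vertices D \<sigma>)"
proof -
  have "card D = (\<Sum>V\<in>map_vertices D \<sigma>. card (V \<inter> D))"
    unfolding map_vertices_eq by (rule sum_card_orbits_Int[OF sigma_permutes finite_darts, symmetric]) simp
  also have "\<dots> = (\<Sum>V\<in>map_vertices D \<sigma>. 3)"
    using permutes_orbit_subset[OF sigma_permutes]
    by (intro sum.cong) (auto simp: map_vertices_eq card_vertex Int_absorb2)
  finally show ?thesis by simp
qed

lemma card_matching_eq_card_vertices: "card M = card (map_vertices D \<sigma>)"
proof -
  have "card M = (\<Sum>V\<in>map_vertices D \<sigma>. card (V \<inter> M))"
    unfolding map_vertices_eq
    by (rule sum_card_orbits_Int[OF sigma_permutes finite_darts matching_subset, symmetric])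
  also have "\<dots> = (\<Sum>V\<in>map_vertices D \<sigma>. 1)"
    by (intro sum.cong) (auto simp: map_vertices_eq card_vertex_Int_matching)
  finally show ?thesis by simp
qed

lemma card_faces_if_spherical:
  assumes "spherical_map D \<alpha> \<sigma>"
  shows "2 * card (map_faces D \<alpha> \<sigma>) = card M + 4"
  using assms card_darts_eq_card_edges card_darts_eq_card_vertices card_matching_eq_card_vertices
  unfolding spherical_map_def by linarith

lemma alpha_sigma_sigma_in_face:
  assumes "F \<in> map_faces D \<alpha> \<sigma>" "d \<in> F"
  shows "\<alpha> (\<sigma> (\<sigma> d)) \<in> F"
proof -
  have "d \<in> D" using assms face_subset_darts by blast
  then have "\<phi> (\<alpha> (\<sigma> (\<sigma> d))) = d" by simp
  with assms show ?thesis using phi_in_face_iff by metis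
qed

text \<open>A face through \<open>d\<close> arrives at the vertex of \<open>d\<close> along the edge of \<open>\<sigma> (\<sigma> d)\<close> and leaves
along the edge of \<open>d\<close>, so \<open>d \<in> F\<close> is an unmatched corner iff the matching edge of that vertex
is not at this corner of \<open>F\<close>.\<close>

definition unmatched_corners :: "'d set" where
  "unmatched_corners = {d \<in> D. \<sigma> d \<in> M}"

lemma card_unmatched_corners: "card unmatched_corners = card M"
proof -
  have "\<sigma> ` unmatched_corners = M"
    using matching_subset permutes_image[OF sigma_permutes] by (auto simp: unmatched_corners_def)
  moreover have "inj_on \<sigma> unmatched_corners"
    using permutes_inj[OF sigma_permutes] inj_on_subset by blast
  ultimately show ?thesis using card_image by metis
qed

definition face_weight :: "'d set \<Rightarrow> nat" where
  "face_weight F = card (F \<inter> M) + card (F \<inter> unmatched_corners)"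

lemma sum_face_weight: "(\<Sum>F\<in>map_faces D \<alpha> \<sigma>. face_weight F) = 2 * card M"
  using sum_card_orbits_Int[OF phi_permutes finite_darts matching_subset]
    sum_card_orbits_Int[OF phi_permutes finite_darts, of unmatched_corners] card_unmatched_corners
  by (simp add: face_weight_def sum.distrib map_faces_eq unmatched_corners_def)

lemma face_m_le: "F \<in> map_faces D \<alpha> \<sigma> \<Longrightarrow> face_m \<alpha> M F \<le> card (F \<inter> M)"
  and face_m_pos: "F \<in> map_faces D \<alpha> \<sigma> \<Longrightarrow> F \<inter> M \<noteq> {} \<Longrightarrow> 0 < face_m \<alpha> M F"
proof -
  assume F: "F \<in> map_faces D \<alpha> \<sigma>"
  have m: "face_m \<alpha> M F = card (map_edge \<alpha> ` (F \<inter> M))"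
    unfolding face_m_def by (rule arg_cong[where f = card]) blast
  have "finite (F \<inter> M)"
    using F face_subset_darts finite_darts finite_subset by blast
  then show "face_m \<alpha> M F \<le> card (F \<inter> M)" "F \<inter> M \<noteq> {} \<Longrightarrow> 0 < face_m \<alpha> M F"
    unfolding m by (simp_all add: card_image_le card_gt_0_iff)
qed

lemma face_l_le:
  assumes F: "F \<in> map_faces D \<alpha> \<sigma>"
  shows "face_l \<alpha> \<sigma> M F \<le> card (F \<inter> unmatched_corners)"
proof -
  let ?L = "{morbit \<sigma> d | d. d \<in> F \<and> (\<forall>x \<in> morbit \<sigma> d \<inter> M. map_edge \<alpha> x \<inter> F = {})}"
  have "?L \<subseteq> orbit \<sigma> ` (F \<inter> unmatched_corners)"
  proof
    fix V assume "V \<in> ?L"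
    then obtain d where d: "V = orbit \<sigma> d" "d \<in> F"
      and off: "\<forall>x \<in> orbit \<sigma> d \<inter> M. map_edge \<alpha> x \<inter> F = {}"
      by (auto simp: morbit_eq_orbit[OF permutation_sigma])
    have "d \<in> D" using F d(2) face_subset_darts by blast
    have "d \<notin> M"
      using off d(2) permutation_self_in_orbit[OF permutation_sigma, of d]
      by (auto simp: map_edge_def)
    moreover have "\<sigma> (\<sigma> d) \<notin> M"
      using off alpha_sigma_sigma_in_face[OF F d(2)] \<open>d \<in> D\<close> vertex_eq
      by (auto simp: map_edge_def)
    ultimately have "\<sigma> d \<in> M"
      using \<open>d \<in> D\<close> sigma_sigma_in_matching by blast
    with d \<open>d \<in> D\<close> show "V \<in> orbit \<sigma> ` (F \<inter> unmatched_corners)"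
      by (auto simp: unmatched_corners_def)
  qed
  moreover have "finite (F \<inter> unmatched_corners)"
    using F face_subset_darts finite_darts finite_subset by blast
  ultimately have "card ?L \<le> card (F \<inter> unmatched_corners)"
    by (meson card_image_le card_mono finite_imageI le_trans)
  then show ?thesis by (simp add: face_l_def)
qed

lemma matching_free_face_sigma_in_matching:
  assumes F: "F \<in> map_faces D \<alpha> \<sigma>" "F \<inter> M = {}" and d: "d \<in> F"
  shows "\<sigma> d \<in> M"
proof (rule ccontr)
  assume "\<sigma> d \<notin> M"
  moreover have "d \<in> D" "d \<notin> M" using F d face_subset_darts by blast+
  ultimately have "\<alpha> (\<sigma> (\<sigma> d)) \<in> M"
    using sigma_sigma_in_matching alpha_matching by blast
  with F alpha_sigma_sigma_in_face[OF F(1) d] show False by blast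
qed

lemma matching_free_face_meets_vertex:
  assumes cycle: "complement_single_cycle D \<alpha> \<sigma> M"
    and F: "F \<in> map_faces D \<alpha> \<sigma>" "F \<inter> M = {}" and x: "x \<in> D"
  shows "orbit \<sigma> x \<inter> F \<noteq> {}"
proof -
  obtain e where e: "e \<in> F" using face_nonempty[OF F(1)] by blast
  then have "e \<in> D" using F(1) face_subset_darts by blast
  with cycle x have "(e, x) \<in> ({(y, \<alpha> y) | y. y \<in> D - M} \<union> {(y, \<sigma> y) | y. y \<in> D})\<^sup>*"
    by (simp add: complement_single_cycle_def)
  then show ?thesis
  proof (induction rule: rtrancl_induct)
    case base
    then show ?case using e permutation_self_in_orbit[OF permutation_sigma] by blast
  next
    case (step y z)
    from step.hyps(2) consider (sigma) "z = \<sigma> y" | (alpha) "y \<in> D" "y \<notin> M" "z = \<alpha> y"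
      by blast
    then show ?case
    proof cases
      case sigma
      then show ?thesis using step.IH permutation_orbit_step[OF permutation_sigma] by simp
    next
      case alpha
      from step.IH obtain c where c: "c \<in> orbit \<sigma> y" "c \<in> F" by blast
      then consider "c = y" | "c = \<sigma> y" | "c = \<sigma> (\<sigma> y)"
        using vertex_eq[OF alpha(1)] by blast
      then show ?thesis
      proof cases
        case 1
        then have "\<sigma> (\<alpha> y) \<in> F" using c(2) phi_in_face_iff[OF F(1)] by fastforce
        then show ?thesis using alpha(3) orbit.base[of \<sigma>] by blast
      next
        case 2
        then have "\<alpha> y \<in> F" using c(2) phi_in_face_iff[OF F(1), of "\<alpha> y"] alpha(1) by simp
        then show ?thesis using alpha(3) permutation_self_in_orbit[OF permutation_sigma] by blast
      next
        case 3
        then have "y \<in> M" using matching_free_face_sigma_in_matching[OF F c(2)] alpha(1) by simp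
        with alpha(2) show ?thesis by blast
      qed
    qed
  qed
qed

lemma card_matching_free_faces_le_1:
  assumes cycle: "complement_single_cycle D \<alpha> \<sigma> M"
  shows "card {F \<in> map_faces D \<alpha> \<sigma>. F \<inter> M = {}} \<le> 1"
proof -
  have "F0 = F1" if F0: "F0 \<in> map_faces D \<alpha> \<sigma>" "F0 \<inter> M = {}"
    and F1: "F1 \<in> map_faces D \<alpha> \<sigma>" "F1 \<inter> M = {}" for F0 F1
  proof -
    obtain e where e: "e \<in> F0" using face_nonempty[OF F0(1)] by blast
    then have "e \<in> D" using F0(1) face_subset_darts by blast
    then obtain c where c: "c \<in> orbit \<sigma> e" "c \<in> F1"
      using matching_free_face_meets_vertex[OF cycle F1] by blast
    then consider "c = e" | "c = \<sigma> e" | "c = \<sigma> (\<sigma> e)"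
      using vertex_eq[OF \<open>e \<in> D\<close>] by blast
    then show "F0 = F1"
    proof cases
      case 1
      then show ?thesis using face_eq_orbit F0(1) F1(1) e c(2) by metis
    next
      case 2
      then show ?thesis using matching_free_face_sigma_in_matching[OF F0 e] c(2) F1(2) by blast
    next
      case 3
      then have "e \<in> M" using matching_free_face_sigma_in_matching[OF F1 c(2)] \<open>e \<in> D\<close> by simp
      then show ?thesis using e F0(2) by blast
    qed
  qed
  then show ?thesis
    using finite_map_faces by (auto simp: card_le_Suc0_iff_eq)
qed

lemma exists_light_face:
  assumes "spherical_map D \<alpha> \<sigma>" "complement_single_cycle D \<alpha> \<sigma> M"
  shows "\<exists>F\<in>map_faces D \<alpha> \<sigma>. F \<inter> M \<noteq> {} \<and> face_weight F \<le> 3"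
proof (rule ccontr)
  assume "\<not> ?thesis"
  then have heavy: "3 < face_weight F" if "F \<in> map_faces D \<alpha> \<sigma>" "F \<inter> M \<noteq> {}" for F
    using that by auto
  define Y where "Y = {F \<in> map_faces D \<alpha> \<sigma>. F \<inter> M \<noteq> {}}"
  have "map_faces D \<alpha> \<sigma> = Y \<union> {F \<in> map_faces D \<alpha> \<sigma>. F \<inter> M = {}}"
    by (auto simp: Y_def)
  then have "card (map_faces D \<alpha> \<sigma>) \<le> card Y + card {F \<in> map_faces D \<alpha> \<sigma>. F \<inter> M = {}}"
    by (metis card_Un_le)
  then have few_faces: "card (map_faces D \<alpha> \<sigma>) \<le> card Y + 1"
    using card_matching_free_faces_le_1[OF assms(2)] by linarith
  have "4 * card Y = (\<Sum>F\<in>Y. 4)" by simp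
  also have "\<dots> \<le> (\<Sum>F\<in>Y. face_weight F)"
    by (rule sum_mono) (auto simp: Y_def dest: heavy)
  also have "\<dots> \<le> (\<Sum>F\<in>map_faces D \<alpha> \<sigma>. face_weight F)"
    by (rule sum_mono2[OF finite_map_faces]) (auto simp: Y_def)
  also have "\<dots> = 2 * card M" by (rule sum_face_weight)
  finally show False
    using few_faces card_faces_if_spherical[OF assms(1)] by linarith
qed

end

theorem lemma2p7:
  fixes D :: "'d set" and \<alpha> \<sigma> :: "'d \<Rightarrow> 'd" and M :: "'d set"
  assumes "spherical_map D \<alpha> \<sigma>"
    and "trivalent D \<sigma>"
    and "perfect_matching D \<alpha> \<sigma> M"
    and "complement_single_cycle D \<alpha> \<sigma> M"
  shows "\<exists>F \<in> map_faces D \<alpha> \<sigma>.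
           (face_m \<alpha> M F, face_l \<alpha> \<sigma> M F) \<in> {(1,0), (1,1), (1,2), (2,0), (2,1), (3,0)}"
proof -
  interpret cubic_matched_map D \<alpha> \<sigma> M
    using assms(1-3) by unfold_locales (simp_all add: spherical_map_def)
  obtain F where F: "F \<in> map_faces D \<alpha> \<sigma>" "F \<inter> M \<noteq> {}" "face_weight F \<le> 3"
    using exists_light_face assms(1,4) by blast
  have "0 < face_m \<alpha> M F" "face_m \<alpha> M F + face_l \<alpha> \<sigma> M F \<le> 3"
    using face_m_pos[OF F(1,2)] face_m_le[OF F(1)] face_l_le[OF F(1)] F(3)
    by (auto simp: face_weight_def)
  moreover have "(m, l) \<in> {(1,0), (1,1), (1,2), (2,0), (2,1), (3,0)}"
    if "0 < m" "m + l \<le> 3" for m l :: nat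
    using that by (simp; presburger)
  ultimately show ?thesis using F(1) by blast
qed

end
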